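(* Assume (H3) and (H0)–(H2). Let $u\in USC(\mathbb T^N;\mathbb R^m)$ be a bounded viscosity subsolution of the stationary system (S). Then $u$ is Lipschitz continuous on $\mathbb T^N$ with a constant $L$ depending only on $H_1,\dots,H_m$, $D$ and $|u|_\infty$. If moreover $\sum_{j=1}^m d_{ij}(x)=0$ for all $x\in\mathbb T^N$ and all $i$, and $D(x)$ is irreducible for all $x\in\mathbb T^N$, then $L$ can be chosen independent of $|u|_\infty$ (depending only on $H_1,\dots,H_m$ and $D$).
   Context: $\mathbb T^N=\mathbb R^N/\mathbb Z^N$; $D(x)=(d_{ij}(x))_{1\le i,j\le m}$. (H3): each $d_{ij}$ continuous on $\mathbb T^N$, $d_{ii}\ge0$, $d_{ij}\le0$ for $i\ne j$, $\sum_j d_{ij}\ge0$. Irreducible: for every proper subset $\mathcal I\subsetneq\{1,\dots,m\}$ there exist $i\in\mathcal I$, $j\notin\mathcal I$ with $d_{ij}(x)\ne0$. $H_i(x,p)=F_i(x,p)-f_i(x)$ with (H0) $f_i,F_i$ continuous, $1$-periodic in $x$; (H1) $F_i(x,\cdot)$ convex, coercive ($\inf_xF_i(x,p)\to\infty$ as $|p|\to\infty$), $F_i(x,p)\ge F_i(x,0)=0$; (H2) $f_i\ge0$. System (S): $H_i(x,Du_i)+\sum_j d_{ij}(x)u_j=0$ in $\mathbb T^N$, $1\le i\le m$; viscosity subsolution: $u$ USC and whenever $\phi\in C^1$ and $u_i-\phi$ has a local max at $x$, $H_i(x,D\phi(x))+\sum_j d_{ij}(x)u_j(x)\le 0$.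 *)

theory Defs
  imports "HOL-Analysis.Analysis"
begin

text \<open>The torus T^N = R^N / Z^N: functions on T^N are Z^N-periodic functions on R^N,
  with R^N rendered as real^'n (N = CARD('n)).\<close>

definition periodic :: "(real^'n \<Rightarrow> 'b) \<Rightarrow> bool" where
  "periodic g \<longleftrightarrow> (\<forall>x. \<forall>k::'n \<Rightarrow> int. g (x + (\<chi> i. of_int (k i))) = g x)"

definition usc :: "(real^'n \<Rightarrow> real) \<Rightarrow> bool" where
  "usc g \<longleftrightarrow> (\<forall>x. \<forall>a. g x < a \<longrightarrow> (\<forall>\<^sub>F y in at x. g y < a))"

definition C1_periodic :: "(real^'n \<Rightarrow> real) \<Rightarrow> (real^'n \<Rightarrow> real^'n) \<Rightarrow> bool" where
  "C1_periodic phi Dphi \<longleftrightarrow> periodic phi \<and> continuous_on UNIV Dphi \<and>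
     (\<forall>y. (phi has_derivative (\<lambda>h. Dphi y \<bullet> h)) (at y))"

definition local_max_at :: "(real^'n \<Rightarrow> real) \<Rightarrow> real^'n \<Rightarrow> bool" where
  "local_max_at g x \<longleftrightarrow> (\<exists>e>0. \<forall>y. dist y x < e \<longrightarrow> g y \<le> g x)"

definition visc_subsol ::
  "('m::finite \<Rightarrow> real^'n \<Rightarrow> real^'n \<Rightarrow> real) \<Rightarrow> ('m \<Rightarrow> 'm \<Rightarrow> real^'n \<Rightarrow> real)
    \<Rightarrow> ('m \<Rightarrow> real^'n \<Rightarrow> real) \<Rightarrow> bool" where
  "visc_subsol H d u \<longleftrightarrow> (\<forall>i. usc (u i)) \<and>
     (\<forall>i phi Dphi x. C1_periodic phi Dphi \<longrightarrow> local_max_at (\<lambda>y. u i y - phi y) x \<longrightarrow>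
        H i x (Dphi x) + (\<Sum>j\<in>UNIV. d i j x * u j x) \<le> 0)"

definition irreducible_at :: "('m::finite \<Rightarrow> 'm \<Rightarrow> real^'n \<Rightarrow> real) \<Rightarrow> real^'n \<Rightarrow> bool" where
  "irreducible_at d x \<longleftrightarrow> (\<forall>I. I \<noteq> {} \<and> I \<subset> UNIV \<longrightarrow> (\<exists>i\<in>I. \<exists>j. j \<notin> I \<and> d i j x \<noteq> 0))"

end

theory Submission
  imports Defs
begin

(*
  A bounded usc function v which is a viscosity subsolution of |Dv| < R
  is R-Lipschitz: otherwise v - R|. - x0| attains a maximum away from x0, where the
  cone is touched from above by a paraboloid whose slope has norm exactly R.  For a
  subsolution u of the system, coercivity of F_i turns a bound K on the right-hand
  side f_i - (Du)_i into such a gradient bound, with R depending only on F and K.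

  Since test functions on the torus must be periodic, we first construct, from
  trigonometric polynomials, periodic C^1 functions that dominate a given paraboloid
  near a point (periodic_test_function).  After some facts on upper semicontinuous and
  on continuous periodic functions, the first part of the theorem follows by bounding
  (Du)_i by N sup|D| sup|u|.  For the second part, a continuous (hence, by the first
  part, any bounded) subsolution satisfies (Du)_i \<le> f_i pointwise; for a uniformly
  irreducible coupling with zero row sums this bounds the oscillation max_i u_i -
  min_i u_i independently of sup|u| (irreducible_oscillation_bound), and hence also
  the right-hand side, since (Du)_i = sum_j d_ij (u_j - u_i).
*)

lemma sin_cubic_bound:
  fixes x :: real
  shows "\<bar>sin x - x\<bar> \<le> \<bar>x\<bar>^3 / 6"
proof -
  have "\<bar>sin x - (\<Sum>m<3. sin_coeff m * x ^ m)\<bar> \<le> inverse (fact 3) * \<bar>x\<bar> ^ 3"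
    by (rule Maclaurin_sin_bound)
  moreover have "(\<Sum>m<3. sin_coeff m * x ^ m) = x"
    by (simp add: numeral_3_eq_3 sin_coeff_def)
  ultimately show ?thesis by (simp add: fact_numeral)
qed

lemma sin_2pi_linear_error:
  fixes t :: real
  assumes t: "\<bar>t\<bar> \<le> 1/20"
  shows "\<bar>sin (2*pi*t) / (2*pi) - t\<bar> \<le> t^2"
proof -
  have "pi^2 \<le> 4^2" using pi_less_4 pi_gt_zero by (intro power_mono) auto
  then have "(2*pi^2/3) * \<bar>t\<bar> \<le> (2*16/3) * (1/20)"
    using t by (intro mult_mono) auto
  then have "(2*pi^2/3) * \<bar>t\<bar> * t^2 \<le> 1 * t^2"
    by (intro mult_right_mono) (auto simp: algebra_simps)
  then have small: "(2*pi^2/3) * \<bar>t\<bar> * t^2 \<le> t^2"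
    by simp
  have "\<bar>sin (2*pi*t) / (2*pi) - t\<bar> = \<bar>sin (2*pi*t) - 2*pi*t\<bar> / (2*pi)"
    by (simp add: field_simps)
  also have "\<dots> \<le> (\<bar>2*pi*t\<bar>^3 / 6) / (2*pi)"
    by (intro divide_right_mono sin_cubic_bound) simp
  also have "\<dots> = (2*pi^2/3) * \<bar>t\<bar> * t^2"
    by (simp add: field_simps power2_eq_square power3_eq_cube abs_mult)
  finally show ?thesis using small by linarith
qed

lemma one_minus_cos_2pi_lower:
  fixes t :: real
  assumes t: "\<bar>t\<bar> \<le> 1/20"
  shows "pi^2 * t^2 \<le> 1 - cos (2*pi*t)"
proof -
  define x where "x = pi * t"
  have "\<bar>x\<bar> \<le> 4 * (1/20)"
    unfolding x_def abs_mult using pi_less_4 t by (intro mult_mono) auto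
  then have "\<bar>x\<bar>^3 / 6 \<le> \<bar>x\<bar> / 10"
    using mult_left_mono[of "\<bar>x\<bar>^2" "(1/5)^2" "\<bar>x\<bar>"] power_mono[of "\<bar>x\<bar>" "1/5" 2]
    by (simp add: power2_eq_square power3_eq_cube)
  then have "(9/10) * \<bar>x\<bar> \<le> \<bar>sin x\<bar>"
    using sin_cubic_bound[of x] by linarith
  then have "((9/10) * \<bar>x\<bar>)^2 \<le> (sin x)^2"
    using power_mono[of "(9/10) * \<bar>x\<bar>" "\<bar>sin x\<bar>" 2] by simp
  moreover have "1 - cos (2*pi*t) = 2 * (sin x)^2"
    using cos_double_sin[of x] by (simp add: x_def mult.assoc)
  moreover have "((9/10) * \<bar>x\<bar>)^2 = (81/100) * (pi^2 * t^2)"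
    unfolding x_def power_mult_distrib power2_abs by (simp add: power2_eq_square)
  moreover have "pi^2 * t^2 \<ge> 0"
    by simp
  ultimately show ?thesis
    by linarith
qed

text \<open>The one-dimensional building block of the periodic test functions: near 0 the
  periodic function t \<mapsto> p sin(2 pi t)/(2 pi) + E (1 - cos (2 pi t)) dominates
  the parabola p t + C t^2 once E is large enough.\<close>
lemma periodic_quadratic_majorant:
  fixes p C P t :: real
  assumes C: "C \<ge> 0" and P: "\<bar>p\<bar> \<le> P" and t: "\<bar>t\<bar> \<le> 1/20"
  shows "p*t + C*t^2 \<le> p * (sin (2*pi*t) / (2*pi)) + ((C+P)/pi^2) * (1 - cos (2*pi*t))"
proof -
  have "\<bar>p * (sin (2*pi*t) / (2*pi) - t)\<bar> \<le> P * t^2"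
    unfolding abs_mult using sin_2pi_linear_error[OF t] P by (intro mult_mono) auto
  then have lin: "p*t - P * t^2 \<le> p * (sin (2*pi*t) / (2*pi))"
    by (simp add: right_diff_distrib)
  have "(C+P) * t^2 = ((C+P)/pi^2) * (pi^2 * t^2)"
    by simp
  also have "\<dots> \<le> ((C+P)/pi^2) * (1 - cos (2*pi*t))"
    using C P one_minus_cos_2pi_lower[OF t] by (intro mult_left_mono) auto
  finally show ?thesis using lin by (simp add: algebra_simps)
qed

lemma trig_shift_int:
  fixes t :: real and n :: int
  shows "sin (2*pi*(t + of_int n)) = sin (2*pi*t)" and "cos (2*pi*(t + of_int n)) = cos (2*pi*t)"
proof -
  have "2*pi*(t + of_int n) = 2*pi*t + (2*pi) * of_int n"
    by (simp add: algebra_simps)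
  then show "sin (2*pi*(t + of_int n)) = sin (2*pi*t)" and "cos (2*pi*(t + of_int n)) = cos (2*pi*t)"
    by (simp_all add: sin_add cos_add)
qed

definition torus_test :: "real^'n \<Rightarrow> real \<Rightarrow> real^'n \<Rightarrow> real \<Rightarrow> real^'n \<Rightarrow> real" where
  "torus_test y0 c p E y = c + (\<Sum>k\<in>UNIV. p$k * (sin (2*pi*(y$k - y0$k)) / (2*pi))
                                         + E * (1 - cos (2*pi*(y$k - y0$k))))"

definition torus_test_grad :: "real^'n \<Rightarrow> real^'n \<Rightarrow> real \<Rightarrow> real^'n \<Rightarrow> real^'n" where
  "torus_test_grad y0 p E y = (\<chi> k. p$k * cos (2*pi*(y$k - y0$k)) + E * (2*pi) * sin (2*pi*(y$k - y0$k)))"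

lemma torus_test_periodic:
  fixes y0 :: "real^'n"
  shows "periodic (torus_test y0 c p E)"
  unfolding periodic_def
proof (intro allI)
  fix x :: "real^'n" and m :: "'n \<Rightarrow> int"
  have shift: "(x + (\<chi> i. of_int (m i)))$k - y0$k = (x$k - y0$k) + of_int (m k)" for k
    by simp
  show "torus_test y0 c p E (x + (\<chi> i. of_int (m i))) = torus_test y0 c p E x"
    unfolding torus_test_def shift trig_shift_int ..
qed

lemma torus_test_has_derivative:
  "(torus_test y0 c p E has_derivative (\<lambda>h. torus_test_grad y0 p E y \<bullet> h)) (at y)"
proof -
  define g where "g = (\<lambda>k t. p$k * (sin (2*pi*t) / (2*pi)) + E * (1 - cos (2*pi*t)))"
  define g' where "g' = (\<lambda>k t. p$k * cos (2*pi*t) + E * (2*pi) * sin (2*pi*t))"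
  have g_deriv: "(g k has_real_derivative g' k t) (at t)" for k t
    unfolding g_def g'_def by (auto intro!: derivative_eq_intros)
  have coord_deriv: "((\<lambda>y. y$k - y0$k) has_derivative (\<lambda>h. h$k)) (at y)" for k
    by (auto intro!: derivative_eq_intros bounded_linear_imp_has_derivative bounded_linear_vec_nth)
  have "((\<lambda>y. c + (\<Sum>k\<in>UNIV. g k (y$k - y0$k)))
          has_derivative (\<lambda>h. 0 + (\<Sum>k\<in>UNIV. g' k (y$k - y0$k) * h$k))) (at y)"
    by (intro has_derivative_add has_derivative_const has_derivative_sum
        has_derivative_compose[OF coord_deriv has_field_derivative_imp_has_derivative[OF g_deriv]])
  moreover have "(\<lambda>h. 0 + (\<Sum>k\<in>UNIV. g' k (y$k - y0$k) * h$k)) = (\<lambda>h. torus_test_grad y0 p E y \<bullet> h)"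
    by (simp add: torus_test_grad_def inner_vec_def g'_def)
  ultimately show ?thesis
    unfolding torus_test_def g_def by simp
qed

lemma torus_test_C1: "C1_periodic (torus_test y0 c p E) (torus_test_grad y0 p E)"
  unfolding C1_periodic_def
  using torus_test_periodic torus_test_has_derivative
  by (auto simp: torus_test_grad_def intro!: continuous_on_vec_lambda continuous_intros)

lemma torus_test_majorant:
  fixes y y0 p :: "real^'n"
  assumes C: "C \<ge> 0" and near: "norm (y - y0) \<le> 1/20"
  shows "c + p \<bullet> (y - y0) + C * (norm (y - y0))^2 \<le> torus_test y0 c p ((C + norm p)/pi^2) y"
proof -
  define h where "h = y - y0"
  have "(norm h)^2 = (\<Sum>k\<in>UNIV. (h$k)^2)"
    unfolding power2_norm_eq_inner inner_vec_def by (simp add: power2_eq_square)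
  then have "p \<bullet> h + C * (norm h)^2 = (\<Sum>k\<in>UNIV. p$k * h$k + C * (h$k)^2)"
    by (simp add: inner_vec_def sum.distrib sum_distrib_left)
  also have "\<dots> \<le> (\<Sum>k\<in>UNIV. p$k * (sin (2*pi*h$k) / (2*pi)) + ((C + norm p)/pi^2) * (1 - cos (2*pi*h$k)))"
  proof (rule sum_mono)
    fix k
    have "\<bar>h$k\<bar> \<le> 1/20"
      using component_le_norm_cart[of h k] near by (simp add: h_def)
    then show "p$k * h$k + C * (h$k)^2
        \<le> p$k * (sin (2*pi*h$k) / (2*pi)) + ((C + norm p)/pi^2) * (1 - cos (2*pi*h$k))"
      using periodic_quadratic_majorant[OF C component_le_norm_cart[of p k]] by simp
  qed
  finally show ?thesis
    unfolding torus_test_def h_def by simp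
qed

text \<open>Existence of periodic test functions: if v - g has a local maximum at y0 and g lies
  below a paraboloid with slope p at y0, then v can be tested at y0 by a C^1 periodic
  function with gradient p there.  (Test functions in the definition of viscosity
  subsolutions on the torus have to be periodic, so g itself cannot be used.)\<close>
lemma periodic_test_function:
  fixes v g :: "real^'n \<Rightarrow> real" and y0 p :: "real^'n"
  assumes max: "local_max_at (\<lambda>y. v y - g y) y0" and C: "C \<ge> 0" and \<rho>: "\<rho> > 0"
    and above: "\<And>h. norm h < \<rho> \<Longrightarrow> g (y0 + h) \<le> g y0 + p \<bullet> h + C * (norm h)^2"
  shows "\<exists>phi Dphi. C1_periodic phi Dphi \<and> local_max_at (\<lambda>y. v y - phi y) y0 \<and> Dphi y0 = p"
proof -
  define phi where "phi = torus_test y0 (g y0) p ((C + norm p)/pi^2)"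
  obtain e where e: "e > 0" "\<And>y. dist y y0 < e \<Longrightarrow> v y - g y \<le> v y0 - g y0"
    using max unfolding local_max_at_def by blast
  have "v y - phi y \<le> v y0 - phi y0" if "dist y y0 < min e (min \<rho> (1/20))" for y
  proof -
    have "g y \<le> g y0 + p \<bullet> (y - y0) + C * (norm (y - y0))^2"
      using above[of "y - y0"] that by (simp add: dist_norm)
    also have "\<dots> \<le> phi y"
      unfolding phi_def using that by (intro torus_test_majorant C) (simp add: dist_norm)
    finally show ?thesis
      using e(2)[of y] that by (simp add: phi_def torus_test_def)
  qed
  then have "local_max_at (\<lambda>y. v y - phi y) y0"
    unfolding local_max_at_def using e(1) \<rho> by (intro exI[of _ "min e (min \<rho> (1/20))"]) auto
  moreover have "torus_test_grad y0 p ((C + norm p)/pi^2) y0 = p"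
    by (simp add: torus_test_grad_def vec_eq_iff)
  ultimately show ?thesis
    using torus_test_C1 unfolding phi_def by blast
qed

lemma usc_open_sublevel:
  fixes w :: "real^'n \<Rightarrow> real"
  assumes "usc w"
  shows "open {y. w y < a}"
proof (subst open_subopen, intro ballI)
  fix x assume "x \<in> {y. w y < a}"
  then have "w x < a" by simp
  then have "\<forall>\<^sub>F y in nhds x. w y < a"
    using assms unfolding usc_def by (simp add: eventually_nhds_conv_at)
  then show "\<exists>T. open T \<and> x \<in> T \<and> T \<subseteq> {y. w y < a}"
    unfolding eventually_nhds by auto
qed

lemma usc_diff_continuous:
  fixes v c :: "real^'n \<Rightarrow> real"
  assumes "usc v" and "continuous_on UNIV c"
  shows "usc (\<lambda>y. v y - c y)"
  unfolding usc_def
proof (intro allI impI)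
  fix x a assume a: "v x - c x < a"
  define e where "e = (a - (v x - c x)) / 2"
  have e: "e > 0" using a by (simp add: e_def)
  have "\<forall>\<^sub>F y in at x. v y < v x + e"
    using assms(1) e unfolding usc_def by auto
  moreover have "\<forall>\<^sub>F y in at x. dist (c y) (c x) < e"
    using assms(2) e by (intro tendstoD) (simp add: continuous_on_def)
  ultimately show "\<forall>\<^sub>F y in at x. v y - c y < a"
  proof eventually_elim
    case (elim y)
    then have "c x - c y < e" and "v y < v x + e"
      by (auto simp: dist_real_def)
    then show ?case
      using e_def by (simp add: field_simps)
  qed
qed

lemma usc_attains_max:
  fixes w :: "real^'n \<Rightarrow> real"
  assumes usc: "usc w" and S: "compact S" "S \<noteq> {}"
  shows "\<exists>y\<in>S. \<forall>z\<in>S. w z \<le> w y"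
proof (rule ccontr)
  assume "\<not> ?thesis"
  then obtain z where z: "\<And>y. y \<in> S \<Longrightarrow> z y \<in> S \<and> w y < w (z y)"
    by (metis not_le)
  have "S \<subseteq> (\<Union>y\<in>S. {t. w t < w (z y)})"
    using z by auto
  then obtain C where C: "C \<subseteq> S" "finite C" "S \<subseteq> (\<Union>y\<in>C. {t. w t < w (z y)})"
    using compactE_image[OF S(1)] usc_open_sublevel[OF usc] by metis
  then have "C \<noteq> {}" using S(2) by auto
  define m where "m = Max ((\<lambda>y. w (z y)) ` C)"
  have "m \<in> (\<lambda>y. w (z y)) ` C"
    unfolding m_def using C(2) \<open>C \<noteq> {}\<close> by (intro Max_in) auto
  then obtain y1 where y1: "y1 \<in> C" "w (z y1) = m"
    by auto
  then obtain y2 where y2: "y2 \<in> C" "m < w (z y2)"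
    using C z by blast
  moreover have "w (z y2) \<le> m"
    unfolding m_def using C(2) y2(1) by (intro Max_ge) auto
  ultimately show False by simp
qed

lemma usc_attains_global_max:
  fixes w :: "real^'n \<Rightarrow> real"
  assumes usc: "usc w" and outside: "\<And>y. dist y x0 > \<rho> \<Longrightarrow> w y < w x0"
  shows "\<exists>ys. \<forall>y. w y \<le> w ys"
proof -
  have "x0 \<in> cball x0 \<rho>"
    using outside[of x0] by force
  then obtain ys where ys: "\<forall>z\<in>cball x0 \<rho>. w z \<le> w ys"
    using usc_attains_max[OF usc compact_cball] by blast
  have "w y \<le> w ys" for y
    using ys outside[of y] \<open>x0 \<in> cball x0 \<rho>\<close>
    by (cases "y \<in> cball x0 \<rho>") (auto simp: dist_commute intro: order_trans[OF less_imp_le])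
  then show ?thesis by blast
qed

definition grad_bounded_subsol :: "(real^'n \<Rightarrow> real) \<Rightarrow> real \<Rightarrow> bool" where
  "grad_bounded_subsol v R \<longleftrightarrow>
     (\<forall>phi Dphi x. C1_periodic phi Dphi \<longrightarrow> local_max_at (\<lambda>y. v y - phi y) x \<longrightarrow> norm (Dphi x) < R)"

lemma norm_quadratic_majorant:
  fixes z h :: "real^'n"
  assumes z: "z \<noteq> 0" and h: "norm h < norm z"
  shows "norm (z + h) \<le> norm z + (z \<bullet> h) / norm z + (norm h)^2 / (2 * norm z)"
proof -
  define r where "r = norm z"
  define a where "a = (z \<bullet> h) / r + (norm h)^2 / (2*r)"
  have r: "r > 0" using z by (simp add: r_def)
  have "- (r * norm h) \<le> z \<bullet> h"
    using norm_cauchy_schwarz[of "-z" h] by (simp add: r_def)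
  then have "- norm h \<le> (z \<bullet> h) / r"
    using r by (simp add: field_simps)
  moreover have "norm h < r" and "0 \<le> (norm h)^2 / (2*r)"
    using h r by (simp_all add: r_def)
  ultimately have nonneg: "0 \<le> r + a"
    unfolding a_def by linarith
  have "(norm (z + h))^2 = r^2 + 2 * (z \<bullet> h) + (norm h)^2"
    unfolding r_def power2_norm_eq_inner by (simp add: inner_add inner_commute)
  also have "\<dots> \<le> r^2 + 2 * (z \<bullet> h) + (norm h)^2 + a^2"
    by simp
  also have "\<dots> = (r + a)^2"
    unfolding a_def using r by (simp add: power2_eq_square field_simps)
  finally have "norm (z + h) \<le> r + a"
    using nonneg by (rule power2_le_imp_le)
  then show ?thesis
    unfolding a_def r_def by (simp add: add.assoc)
qed

text \<open>If
  v y1 - v x0 > R |y1 - x0|, then v - R |. - x0| attains its maximum at some ys \<noteq> x0,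
  where the cone R |. - x0| is touched by a paraboloid of slope norm exactly R.\<close>
lemma grad_bounded_subsol_lipschitz:
  fixes v :: "real^'n \<Rightarrow> real"
  assumes usc: "usc v" and bound: "\<And>x. \<bar>v x\<bar> \<le> M" and R: "R > 0"
    and subsol: "grad_bounded_subsol v R"
  shows "v y1 - v x0 \<le> R * dist y1 x0"
proof (rule ccontr)
  assume contra: "\<not> ?thesis"
  define c where "c = (\<lambda>y. R * dist y x0)"
  have "usc (\<lambda>y. v y - c y)"
    unfolding c_def by (intro usc_diff_continuous usc continuous_intros)
  moreover have "v y - c y < v x0 - c x0" if "dist y x0 > (2*M + 1) / R" for y
  proof -
    have "2*M + 1 < R * dist y x0"
      using that R by (simp add: pos_divide_less_eq mult.commute)
    then show ?thesis
      using bound[of y] bound[of x0] by (simp add: c_def)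
  qed
  ultimately obtain ys where ys: "\<forall>y. v y - c y \<le> v ys - c ys"
    using usc_attains_global_max[of "\<lambda>y. v y - c y" "(2*M + 1) / R" x0] by blast
  have "v x0 - c x0 < v y1 - c y1"
    using contra by (simp add: c_def)
  then have "ys \<noteq> x0"
    using ys[rule_format, of y1] by auto
  define z where "z = ys - x0"
  define p where "p = (R / norm z) *\<^sub>R z"
  have z: "z \<noteq> 0" using \<open>ys \<noteq> x0\<close> by (simp add: z_def)
  have "c (ys + h) \<le> c ys + p \<bullet> h + (R / (2 * norm z)) * (norm h)^2" if "norm h < norm z" for h
  proof -
    have "c (ys + h) = R * norm (z + h)"
      by (simp add: c_def z_def dist_norm algebra_simps)
    also have "\<dots> \<le> R * (norm z + (z \<bullet> h) / norm z + (norm h)^2 / (2 * norm z))"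
      using norm_quadratic_majorant[OF z that] R by simp
    also have "\<dots> = c ys + p \<bullet> h + (R / (2 * norm z)) * (norm h)^2"
    proof -
      have "c ys = R * norm z" and "p \<bullet> h = (R / norm z) * (z \<bullet> h)"
        by (simp_all add: c_def z_def p_def dist_norm)
      then show ?thesis
        using z by (simp add: field_simps)
    qed
    finally show ?thesis .
  qed
  moreover have "local_max_at (\<lambda>y. v y - c y) ys"
    unfolding local_max_at_def using ys by (intro exI[of _ 1]) auto
  ultimately obtain phi Dphi where
    "C1_periodic phi Dphi" "local_max_at (\<lambda>y. v y - phi y) ys" "Dphi ys = p"
    using periodic_test_function[of v c ys "R / (2 * norm z)" "norm z" p] R z by auto
  then have "norm p < R"
    using subsol unfolding grad_bounded_subsol_def by blast
  moreover have "norm p = R"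
    using z R by (simp add: p_def)
  ultimately show False by simp
qed

corollary grad_bounded_subsol_lipschitz_abs:
  fixes v :: "real^'n \<Rightarrow> real"
  assumes "usc v" and "\<And>x. \<bar>v x\<bar> \<le> M" and "R > 0" and "grad_bounded_subsol v R"
  shows "\<bar>v x - v y\<bar> \<le> R * dist x y"
  using grad_bounded_subsol_lipschitz[OF assms, of x y] grad_bounded_subsol_lipschitz[OF assms, of y x]
  by (simp add: dist_commute)

lemma periodic_unit_cube_representative:
  fixes g :: "real^'n \<Rightarrow> 'b"
  assumes "periodic g"
  shows "\<exists>x'\<in>cbox 0 1. g x = g x'"
proof
  define x' where "x' = x - (\<chi> i. of_int \<lfloor>x$i\<rfloor>)"
  have "0 \<le> x$i - of_int \<lfloor>x$i\<rfloor> \<and> x$i - of_int \<lfloor>x$i\<rfloor> \<le> 1" for i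
    using of_int_floor_le[of "x$i"] real_of_int_floor_add_one_gt[of "x$i"] by linarith
  then show "x' \<in> cbox 0 1"
    by (simp add: x'_def mem_box_cart)
  show "g x = g x'"
    using assms[unfolded periodic_def, rule_format, of x' "\<lambda>i. \<lfloor>x$i\<rfloor>"] by (simp add: x'_def)
qed

lemma periodic_continuous_bounded:
  fixes g :: "real^'n \<Rightarrow> real"
  assumes "periodic g" and "continuous_on UNIV g"
  shows "\<exists>B. \<forall>x. \<bar>g x\<bar> \<le> B"
proof -
  have "compact (g ` cbox 0 1)"
    using assms(2) by (intro compact_continuous_image) (auto intro: continuous_on_subset)
  then obtain B where "\<forall>y\<in>g ` cbox 0 1. norm y \<le> B"
    using compact_imp_bounded bounded_iff by metis
  then show ?thesis
    using periodic_unit_cube_representative[OF assms(1)] by fastforce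
qed

lemma periodic_continuous_family_bounded:
  fixes g :: "'k::finite \<Rightarrow> real^'n \<Rightarrow> real"
  assumes "\<And>k. periodic (g k)" and "\<And>k. continuous_on UNIV (g k)"
  shows "\<exists>B\<ge>0. \<forall>k x. \<bar>g k x\<bar> \<le> B"
proof -
  obtain b where b: "\<And>k x. \<bar>g k x\<bar> \<le> b k"
    using periodic_continuous_bounded[OF assms] by metis
  have "\<bar>g k x\<bar> \<le> (\<Sum>k\<in>UNIV. \<bar>b k\<bar>)" for k x
    using b[of k x] member_le_sum[of k UNIV "\<lambda>k. \<bar>b k\<bar>"] by simp
  then show ?thesis
    by (intro exI[of _ "\<Sum>k\<in>UNIV. \<bar>b k\<bar>"]) (auto intro: sum_nonneg)
qed

lemma periodic_continuous_positive_lower_bound: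
  fixes g :: "real^'n \<Rightarrow> real"
  assumes "periodic g" and "continuous_on UNIV g" and "\<And>x. g x > 0"
  shows "\<exists>e>0. \<forall>x. e \<le> g x"
proof -
  have "(0::real^'n) \<in> cbox 0 1"
    by (simp add: mem_box_cart)
  then obtain x0 where x0: "\<forall>y\<in>cbox 0 1. g x0 \<le> g y"
    using continuous_attains_inf[OF compact_cbox _ continuous_on_subset[OF assms(2)]] by blast
  then have "g x0 \<le> g x" for x
    using periodic_unit_cube_representative[OF assms(1), of x] by auto
  then show ?thesis
    using assms(3)[of x0] by blast
qed

lemma double_sum_large_entry:
  fixes a :: "'a \<Rightarrow> 'b \<Rightarrow> real"
  assumes fin: "finite I" "finite J" and card: "card I \<le> N" "card J \<le> N"
    and sum: "e \<le> (\<Sum>i\<in>I. \<Sum>j\<in>J. a i j)" and e: "e > 0"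
  shows "\<exists>i\<in>I. \<exists>j\<in>J. e / (real N * real N + 1) \<le> a i j"
proof (rule ccontr)
  define c where "c = e / (real N * real N + 1)"
  assume "\<not> ?thesis"
  then have "(\<Sum>i\<in>I. \<Sum>j\<in>J. a i j) \<le> (\<Sum>i\<in>I. \<Sum>j\<in>J. c)"
    unfolding c_def by (intro sum_mono) (meson not_le less_imp_le)
  also have "\<dots> = real (card I) * (real (card J) * c)"
    by simp
  also have "\<dots> \<le> real N * (real N * c)"
    using card e by (intro mult_mono) (auto simp: c_def)
  also have "\<dots> = e - c"
    using add_nonneg_pos[of "real N * real N" 1] by (simp add: c_def field_simps)
  also have "\<dots> < e"
    using e by (simp add: c_def add_nonneg_pos)
  finally show False
    using sum by simp
qed

definition uniformly_irreducible :: "real \<Rightarrow> ('m::finite \<Rightarrow> 'm \<Rightarrow> real) \<Rightarrow> bool" where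
  "uniformly_irreducible \<delta> a \<longleftrightarrow> (\<forall>I. I \<noteq> {} \<and> I \<subset> UNIV \<longrightarrow> (\<exists>i\<in>I. \<exists>j. j \<notin> I \<and> \<delta> \<le> - a i j))"

text \<open>The coupling weight of I (sum of the outgoing
  entries -d i j, i \<in> I, j \<notin> I) is a positive continuous periodic function, hence
  bounded below by a positive constant.\<close>
lemma uniform_irreducibility:
  fixes d :: "'m::finite \<Rightarrow> 'm \<Rightarrow> real^'n \<Rightarrow> real"
  assumes cont: "\<And>i j. continuous_on UNIV (d i j)" and per: "\<And>i j. periodic (d i j)"
    and off: "\<And>i j x. i \<noteq> j \<Longrightarrow> d i j x \<le> 0" and irr: "\<And>x. irreducible_at d x"
  shows "\<exists>\<delta>>0. \<forall>x. uniformly_irreducible \<delta> (\<lambda>i j. d i j x)"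
proof -
  define P where "P = {I::'m set. I \<noteq> {} \<and> I \<subset> UNIV}"
  define g where "g = (\<lambda>I x. \<Sum>i\<in>I. \<Sum>j\<in>UNIV - I. - d i j x)"
  have "\<exists>e>0. \<forall>x. e \<le> g I x" if I: "I \<in> P" for I
  proof (rule periodic_continuous_positive_lower_bound)
    show "periodic (g I)"
      using per unfolding periodic_def g_def by simp
    show "continuous_on UNIV (g I)"
      unfolding g_def by (intro continuous_intros cont)
    fix x
    obtain i j where ij: "i \<in> I" "j \<notin> I" "d i j x \<noteq> 0"
      using irr[of x] I unfolding irreducible_at_def P_def by blast
    have nonneg: "0 \<le> - d i' j' x" if "i' \<in> I" "j' \<in> UNIV - I" for i' j'
      using off[of i' j' x] that by auto
    have "0 < - d i j x"
      using off[of i j x] ij by force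
    then have row_pos: "0 < (\<Sum>j\<in>UNIV - I. - d i j x)"
      using ij nonneg by (intro sum_pos2[where i=j]) auto
    have rows_nonneg: "0 \<le> (\<Sum>j\<in>UNIV - I. - d i' j x)" if "i' \<in> I" for i'
      using nonneg that by (auto intro: sum_nonneg)
    show "0 < g I x"
      unfolding g_def
      by (rule sum_pos2[where f="\<lambda>i. \<Sum>j\<in>UNIV - I. - d i j x", OF _ ij(1) row_pos rows_nonneg]) simp
  qed
  then obtain E where E: "\<And>I. I \<in> P \<Longrightarrow> E I > 0 \<and> (\<forall>x. E I \<le> g I x)"
    by metis
  define m where "m = Min (insert 1 (E ` P))"
  have m: "m > 0" and m_le: "\<And>I. I \<in> P \<Longrightarrow> m \<le> E I"
    unfolding m_def using E by (auto simp: Min_gr_iff)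
  define \<delta> where "\<delta> = m / (real CARD('m) * real CARD('m) + 1)"
  have "uniformly_irreducible \<delta> (\<lambda>i j. d i j x)" for x
    unfolding uniformly_irreducible_def
  proof (intro allI impI)
    fix I :: "'m set" assume "I \<noteq> {} \<and> I \<subset> UNIV"
    then have "I \<in> P" by (simp add: P_def)
    then have "m \<le> (\<Sum>i\<in>I. \<Sum>j\<in>UNIV - I. - d i j x)"
      using E m_le unfolding g_def by (meson order_trans)
    then show "\<exists>i\<in>I. \<exists>j. j \<notin> I \<and> \<delta> \<le> - d i j x"
      using double_sum_large_entry[of I "UNIV - I" "CARD('m)" m] m
      unfolding \<delta>_def by (fastforce intro: card_mono)
  qed
  moreover have "\<delta> > 0"
    using m by (simp add: \<delta>_def add_nonneg_pos)
  ultimately show ?thesis by blast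
qed

lemma oscillation_step:
  fixes a :: "'m::finite \<Rightarrow> 'm \<Rightarrow> real" and w :: "'m \<Rightarrow> real"
  assumes off: "\<And>i j. i \<noteq> j \<Longrightarrow> a i j \<le> 0" and rows: "\<And>i. (\<Sum>j\<in>UNIV. a i j) = 0"
    and bounded: "\<And>i j. \<bar>a i j\<bar> \<le> A" and ineq: "\<And>i. (\<Sum>j\<in>UNIV. a i j * w j) \<le> B"
    and top: "\<And>l. w l \<le> w im" and t: "0 \<le> t" and near_top: "w im - w i \<le> t"
    and coupling: "\<delta> \<le> - a i j" "i \<noteq> j" and \<delta>: "\<delta> > 0" and B: "B \<ge> 0"
  shows "w im - w j \<le> t + (B + real CARD('m) * A * t) / \<delta>"
proof -
  define T where "T = (\<lambda>l. - a i l * (w i - w l))"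
  have sum_T: "(\<Sum>l\<in>UNIV. T l) = (\<Sum>l\<in>UNIV. a i l * w l)"
    using rows[of i] by (simp add: T_def algebra_simps sum_subtractf sum_distrib_left[symmetric])
  have T_lower: "- (A * t) \<le> T l" for l
  proof (cases "l = i")
    case False
    then have "0 \<le> - a i l" and "- t \<le> w i - w l" and "- A \<le> a i l"
      using off top[of l] near_top bounded[of i l] by (auto simp: abs_le_iff)
    then have "- a i l * (- t) \<le> T l" and "- A * t \<le> a i l * t"
      using t unfolding T_def by (intro mult_left_mono mult_right_mono; simp)+
    then show ?thesis by simp
  qed (use bounded[of i i] t in \<open>auto simp: T_def\<close>)
  have "(\<Sum>l\<in>UNIV - {j}. - (A * t)) \<le> (\<Sum>l\<in>UNIV - {j}. T l)"
    using T_lower by (intro sum_mono)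
  moreover have "- (real CARD('m) * A * t) \<le> (\<Sum>l\<in>UNIV - {j}. - (A * t))"
  proof -
    have "0 \<le> A * t"
      using bounded[of i i] t by (intro mult_nonneg_nonneg) (auto intro: order_trans[OF abs_ge_zero])
    then have "real (card (UNIV - {j})) * (A * t) \<le> real CARD('m) * (A * t)"
      by (intro mult_right_mono) (auto intro: card_mono)
    then show ?thesis by simp
  qed
  moreover have "(\<Sum>l\<in>UNIV. T l) = T j + (\<Sum>l\<in>UNIV - {j}. T l)"
    by (simp add: sum.remove)
  ultimately have T_j: "T j \<le> B + real CARD('m) * A * t"
    using sum_T ineq[of i] by linarith
  have "w i - w j \<le> (B + real CARD('m) * A * t) / \<delta>"
  proof (cases "w i - w j \<le> 0")
    case True
    moreover have "0 \<le> A" using bounded[of i i] by linarith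
    then have "0 \<le> (B + real CARD('m) * A * t) / \<delta>"
      using B t \<delta> by simp
    ultimately show ?thesis
      by linarith
  next
    case False
    then have "\<delta> * (w i - w j) \<le> T j"
      using coupling unfolding T_def by (intro mult_right_mono) auto
    then show ?thesis
      using T_j \<delta> by (simp add: field_simps)
  qed
  then show ?thesis
    using near_top by linarith
qed

primrec oscillation_level :: "nat \<Rightarrow> real \<Rightarrow> real \<Rightarrow> real \<Rightarrow> nat \<Rightarrow> real" where
  "oscillation_level N A B \<delta> 0 = 0"
| "oscillation_level N A B \<delta> (Suc k) =
     oscillation_level N A B \<delta> k + (B + real N * A * oscillation_level N A B \<delta> k) / \<delta>"

lemma oscillation_level_nonneg_mono:
  assumes "0 \<le> A" "0 \<le> B" "0 < \<delta>"
  shows "0 \<le> oscillation_level N A B \<delta> k"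
    and "oscillation_level N A B \<delta> k \<le> oscillation_level N A B \<delta> (Suc k)"
proof -
  show nonneg: "0 \<le> oscillation_level N A B \<delta> k"
    by (induction k) (use assms in auto)
  show "oscillation_level N A B \<delta> k \<le> oscillation_level N A B \<delta> (Suc k)"
    using nonneg assms by simp
qed

text \<open>The set of indices where w is within the k-th level of its maximum gains an element
  in every step until it exhausts the index set (by irreducibility).\<close>
lemma irreducible_oscillation_bound:
  fixes a :: "'m::finite \<Rightarrow> 'm \<Rightarrow> real" and w :: "'m \<Rightarrow> real"
  assumes off: "\<And>i j. i \<noteq> j \<Longrightarrow> a i j \<le> 0" and rows: "\<And>i. (\<Sum>j\<in>UNIV. a i j) = 0"
    and bounded: "\<And>i j. \<bar>a i j\<bar> \<le> A" and ineq: "\<And>i. (\<Sum>j\<in>UNIV. a i j * w j) \<le> B"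
    and irr: "uniformly_irreducible \<delta> a" and \<delta>: "\<delta> > 0" and B: "B \<ge> 0"
  shows "w i0 - w j0 \<le> oscillation_level CARD('m) A B \<delta> (CARD('m) - 1)"
proof -
  define N where "N = CARD('m)"
  define c where "c = oscillation_level N A B \<delta>"
  have A: "0 \<le> A" using bounded[of i0 i0] by linarith
  note c_props = oscillation_level_nonneg_mono[OF A B \<delta>, of N, folded c_def]
  have "Max (range w) \<in> range w"
    by (intro Max_in) auto
  then obtain im where im: "w im = Max (range w)"
    by (metis imageE)
  have top: "w l \<le> w im" for l
    unfolding im by (auto intro: Max_ge)
  define S where "S = (\<lambda>k. {i. w im - w i \<le> c k})"
  have S_mono: "S k \<subseteq> S (Suc k)" for k
    using c_props(2)[of k] unfolding S_def by auto
  have grow: "Suc k \<le> card (S k)" if "k < N" for k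
    using that
  proof (induction k)
    case 0
    have "im \<in> S 0" by (simp add: S_def c_def)
    then show ?case by (auto simp: card_gt_0_iff Suc_le_eq)
  next
    case (Suc k)
    show ?case
    proof (cases "S k = UNIV")
      case True
      then show ?thesis
        using S_mono[of k] Suc.prems by (simp add: N_def top_unique)
    next
      case False
      have "im \<in> S k" using c_props(1)[of k] by (simp add: S_def)
      then obtain i j where ij: "i \<in> S k" "j \<notin> S k" "\<delta> \<le> - a i j"
        using irr False unfolding uniformly_irreducible_def by blast
      then have "w im - w j \<le> c k + (B + real N * A * c k) / \<delta>"
        unfolding N_def
        by (intro oscillation_step[OF off rows bounded ineq top c_props(1) _ _ _ \<delta> B])
          (auto simp: S_def)
      then have "insert j (S k) \<subseteq> S (Suc k)"
        using S_mono[of k] by (simp add: S_def c_def)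
      then have "Suc (card (S k)) \<le> card (S (Suc k))"
        using card_mono[of "S (Suc k)" "insert j (S k)"] ij(2) by simp
      then show ?thesis
        using Suc by simp
    qed
  qed
  have "N \<le> card (S (N - 1))"
    using grow[of "N - 1"] by (simp add: N_def)
  moreover have "card (S (N - 1)) \<le> N"
    unfolding N_def by (rule card_mono) auto
  ultimately have "S (N - 1) = UNIV"
    by (intro card_subset_eq) (auto simp: N_def)
  then have "w im - w j0 \<le> c (N - 1)"
    by (auto simp: S_def)
  then show ?thesis
    using top[of i0] by (simp add: c_def N_def)
qed

lemma coercive_radius:
  fixes F :: "'m::finite \<Rightarrow> real^'n \<Rightarrow> real^'n \<Rightarrow> real"
  assumes coer: "\<And>i. filterlim (\<lambda>p. INF x. F i x p) at_top at_infinity"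
    and pos: "\<And>i x p. 0 \<le> F i x p"
  shows "\<exists>R>0. \<forall>i x p. R \<le> norm p \<longrightarrow> K < F i x p"
proof -
  have "\<exists>b. \<forall>p. b \<le> norm p \<longrightarrow> K + 1 \<le> (INF x. F i x p)" for i
    using coer[of i] unfolding filterlim_at_top eventually_at_infinity by blast
  then obtain b where b: "\<And>i p. b i \<le> norm p \<Longrightarrow> K + 1 \<le> (INF x. F i x p)"
    by metis
  define R where "R = 1 + (\<Sum>i\<in>UNIV. \<bar>b i\<bar>)"
  have "K < F i x p" if "R \<le> norm p" for i x p
  proof -
    have "b i \<le> norm p"
      using that member_le_sum[of i UNIV "\<lambda>i. \<bar>b i\<bar>"] unfolding R_def by simp
    then have "K + 1 \<le> (INF x. F i x p)"
      by (rule b)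
    also have "\<dots> \<le> F i x p"
      by (rule cINF_lower) (auto intro!: bdd_belowI[of _ 0] simp: pos)
    finally show ?thesis by simp
  qed
  moreover have "R > 0"
    unfolding R_def by (simp add: sum_nonneg add_pos_nonneg)
  ultimately show ?thesis by blast
qed

lemma subsol_lipschitz:
  fixes F :: "'m::finite \<Rightarrow> real^'n \<Rightarrow> real^'n \<Rightarrow> real"
  assumes R: "R > 0" and large: "\<And>i x p. R \<le> norm p \<Longrightarrow> K < F i x p"
    and bound: "\<And>i x. \<bar>u i x\<bar> \<le> M" and subsol: "visc_subsol (\<lambda>i x p. F i x p - f i x) d u"
    and rhs: "\<And>i x. f i x - (\<Sum>j\<in>UNIV. d i j x * u j x) \<le> K"
  shows "\<bar>u i x - u i y\<bar> \<le> R * dist x y"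
proof (rule grad_bounded_subsol_lipschitz_abs[OF _ bound R])
  show "usc (u i)"
    using subsol unfolding visc_subsol_def by blast
  show "grad_bounded_subsol (u i) R"
    unfolding grad_bounded_subsol_def
  proof (intro allI impI)
    fix phi Dphi x
    assume "C1_periodic phi Dphi" and "local_max_at (\<lambda>y. u i y - phi y) x"
    then have "F i x (Dphi x) - f i x + (\<Sum>j\<in>UNIV. d i j x * u j x) \<le> 0"
      using subsol unfolding visc_subsol_def by blast
    then have "F i x (Dphi x) \<le> K"
      using rhs[of i x] by linarith
    then show "norm (Dphi x) < R"
      using large[of "Dphi x" i x] by (meson not_le less_le_trans)
  qed
qed

lemma penalized_max_near:
  fixes v :: "real^'n \<Rightarrow> real"
  assumes usc: "usc v" and bound: "\<And>y. \<bar>v y\<bar> \<le> M" and \<eta>: "\<eta> > 0"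
    and K: "K = (2*M + 1) / \<eta>^2"
  shows "\<exists>ys. dist ys x < \<eta> \<and> local_max_at (\<lambda>y. v y - K * (norm (y - x))^2) ys"
proof -
  define c where "c = (\<lambda>y. K * (norm (y - x))^2)"
  have KM: "K * \<eta>^2 = 2*M + 1"
    using K \<eta> by simp
  have "0 \<le> M" using bound[of x] by linarith
  then have "K > 0" using K \<eta> by simp
  then have far: "v y - c y < v x - c x" if "\<eta> \<le> dist y x" for y
  proof -
    have "\<eta>^2 \<le> (norm (y - x))^2"
      using that \<eta> by (simp add: dist_norm power_mono)
    then have "2*M + 1 \<le> c y"
      unfolding c_def KM[symmetric] using \<open>K > 0\<close> by simp
    then show ?thesis
      using bound[of y] bound[of x] by (simp add: c_def)
  qed
  have "usc (\<lambda>y. v y - c y)"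
    unfolding c_def by (intro usc_diff_continuous usc continuous_intros)
  then obtain ys where ys: "\<forall>y. v y - c y \<le> v ys - c ys"
    using usc_attains_global_max[of "\<lambda>y. v y - c y" \<eta> x] far by fastforce
  then have "dist ys x < \<eta>"
    using far[of ys] by (meson leD not_le)
  moreover have "local_max_at (\<lambda>y. v y - c y) ys"
    unfolding local_max_at_def using ys by (intro exI[of _ 1]) auto
  ultimately show ?thesis
    unfolding c_def by blast
qed

text \<open>A continuous bounded subsolution satisfies (D u)_i \<le> f_i pointwise: at the penalised
  maximum points the test gradient contributes F \<ge> 0, and letting eta \<rightarrow> 0 uses
  continuity of f_i - (D u)_i.\<close>
lemma subsol_pointwise:
  fixes F :: "'m::finite \<Rightarrow> real^'n \<Rightarrow> real^'n \<Rightarrow> real"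
  assumes pos: "\<And>i x p. 0 \<le> F i x p"
    and f_cont: "\<And>i. continuous_on UNIV (f i)" and d_cont: "\<And>i j. continuous_on UNIV (d i j)"
    and u_cont: "\<And>j. continuous_on UNIV (u j)" and bound: "\<And>i x. \<bar>u i x\<bar> \<le> M"
    and subsol: "visc_subsol (\<lambda>i x p. F i x p - f i x) d u"
  shows "(\<Sum>j\<in>UNIV. d i j x * u j x) \<le> f i x"
proof -
  define G where "G = (\<lambda>y. f i y - (\<Sum>j\<in>UNIV. d i j y * u j y))"
  have "continuous_on UNIV G"
    unfolding G_def by (intro continuous_intros f_cont d_cont u_cont)
  have approx: "- \<epsilon> < G x" if \<epsilon>: "\<epsilon> > 0" for \<epsilon>
  proof -
    obtain \<eta> where \<eta>: "\<eta> > 0" "\<And>y. dist y x < \<eta> \<Longrightarrow> dist (G y) (G x) < \<epsilon>"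
      using \<open>continuous_on UNIV G\<close> \<epsilon> unfolding continuous_on_iff by (metis UNIV_I)
    define K where "K = (2*M + 1) / \<eta>^2"
    have "K > 0"
      using bound[of i x] \<eta> by (simp add: K_def add_nonneg_pos)
    have "usc (u i)"
      using subsol unfolding visc_subsol_def by blast
    then obtain ys where ys: "dist ys x < \<eta>" "local_max_at (\<lambda>y. u i y - K * (norm (y - x))^2) ys"
      using penalized_max_near[where v="u i" and x=x, OF _ bound \<eta>(1) K_def] by blast
    have expand: "K * (norm (ys + h - x))^2 = K * (norm (ys - x))^2 + ((2*K) *\<^sub>R (ys - x)) \<bullet> h + K * (norm h)^2"
      for h :: "real^'n"
    proof -
      have "ys + h - x = (ys - x) + h" by simp
      then show ?thesis
        unfolding power2_norm_eq_inner by (simp add: inner_add inner_commute algebra_simps)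
    qed
    have "\<exists>phi Dphi. C1_periodic phi Dphi \<and> local_max_at (\<lambda>y. u i y - phi y) ys
                     \<and> Dphi ys = (2*K) *\<^sub>R (ys - x)"
      by (rule periodic_test_function[where C=K, OF ys(2) _ zero_less_one]) (use \<open>K > 0\<close> expand in auto)
    then obtain phi Dphi where
      "C1_periodic phi Dphi" "local_max_at (\<lambda>y. u i y - phi y) ys" "Dphi ys = (2*K) *\<^sub>R (ys - x)"
      by blast
    then have "F i ys (Dphi ys) - f i ys + (\<Sum>j\<in>UNIV. d i j ys * u j ys) \<le> 0"
      using subsol unfolding visc_subsol_def by blast
    then have "0 \<le> G ys"
      using pos[of i ys "Dphi ys"] by (simp add: G_def)
    then show ?thesis
      using \<eta>(2)[OF ys(1)] by (simp add: dist_real_def)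
  qed
  have "0 \<le> G x"
  proof (rule ccontr)
    assume "\<not> 0 \<le> G x"
    then show False
      using approx[of "- G x"] by simp
  qed
  then show ?thesis
    by (simp add: G_def)
qed

lemma weighted_sum_bound:
  fixes a b :: "'m::finite \<Rightarrow> real"
  assumes "\<And>j. \<bar>a j\<bar> \<le> A" and "\<And>j. \<bar>b j\<bar> \<le> C"
  shows "\<bar>\<Sum>j\<in>UNIV. a j * b j\<bar> \<le> real CARD('m) * A * C"
proof -
  have "\<bar>\<Sum>j\<in>UNIV. a j * b j\<bar> \<le> (\<Sum>j\<in>UNIV. \<bar>a j\<bar> * \<bar>b j\<bar>)"
    using sum_abs[of "\<lambda>j. a j * b j" UNIV] by (simp add: abs_mult)
  also have "\<dots> \<le> (\<Sum>j\<in>(UNIV::'m set). A * C)"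
    using assms by (intro sum_mono mult_mono') auto
  finally show ?thesis by simp
qed

lemma lipschitz_bound_continuous:
  fixes g :: "real^'n \<Rightarrow> real"
  assumes "\<And>x y. \<bar>g x - g y\<bar> \<le> L * dist x y"
  shows "continuous_on UNIV g"
proof (rule lipschitz_on_continuous_on)
  show "\<bar>L\<bar>-lipschitz_on UNIV g"
    unfolding lipschitz_on_def dist_real_def
    using assms order_trans[OF _ mult_right_mono[OF abs_ge_self]] by fastforce
qed

text \<open>First part of the theorem: for bounded subsolutions the right-hand side
  f_i - (D u)_i is bounded in terms of sup f, sup |D| and the bound M on u, so the
  Lipschitz constant depends on M only through this bound.\<close>
lemma bounded_subsol_lipschitz:
  fixes F :: "'m::finite \<Rightarrow> real^'n \<Rightarrow> real^'n \<Rightarrow> real"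
  assumes coer: "\<And>i. filterlim (\<lambda>p. INF x. F i x p) at_top at_infinity"
    and pos: "\<And>i x p. 0 \<le> F i x p"
    and f_le: "\<And>i x. f i x \<le> Fm" and d_le: "\<And>i j x. \<bar>d i j x\<bar> \<le> A"
  shows "\<exists>L. \<forall>u. (\<forall>i x. \<bar>u i x\<bar> \<le> M) \<and> visc_subsol (\<lambda>i x p. F i x p - f i x) d u
              \<longrightarrow> (\<forall>i x y. \<bar>u i x - u i y\<bar> \<le> L * dist x y)"
proof -
  define K where "K = Fm + real CARD('m) * A * \<bar>M\<bar>"
  obtain R where R: "R > 0" "\<And>i x p. R \<le> norm p \<Longrightarrow> K < F i x p"
    using coercive_radius[where F=F and K=K, OF coer pos] by blast
  have "\<bar>u i x - u i y\<bar> \<le> R * dist x y"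
    if bound: "\<forall>i x. \<bar>u i x\<bar> \<le> M" and subsol: "visc_subsol (\<lambda>i x p. F i x p - f i x) d u"
    for u i x y
  proof (rule subsol_lipschitz[OF R _ subsol])
    show "\<bar>u i x\<bar> \<le> M" for i x
      using bound by blast
    show "f i x - (\<Sum>j\<in>UNIV. d i j x * u j x) \<le> K" for i x
      using weighted_sum_bound[of "\<lambda>j. d i j x" A "\<lambda>j. u j x" "\<bar>M\<bar>"] d_le f_le[of i x] bound
      unfolding K_def by (force intro: order_trans[OF _ abs_ge_self])
  qed
  then show ?thesis by blast
qed

text \<open>Second part: with zero row sums and irreducible coupling, the pointwise inequality
  (D u)_i \<le> f_i and the oscillation bound make |u_i - u_j| bounded independently of
  sup |u|, so the right-hand side, written as sum_j d_ij (u_j - u_i), is bounded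
  independently of sup |u| as well.\<close>
lemma irreducible_subsol_lipschitz:
  fixes F :: "'m::finite \<Rightarrow> real^'n \<Rightarrow> real^'n \<Rightarrow> real"
  assumes coer: "\<And>i. filterlim (\<lambda>p. INF x. F i x p) at_top at_infinity"
    and pos: "\<And>i x p. 0 \<le> F i x p"
    and f_cont: "\<And>i. continuous_on UNIV (f i)" and d_cont: "\<And>i j. continuous_on UNIV (d i j)"
    and f_le: "\<And>i x. f i x \<le> Fm" and Fm: "0 \<le> Fm" and d_le: "\<And>i j x. \<bar>d i j x\<bar> \<le> A"
    and off: "\<And>i j x. i \<noteq> j \<Longrightarrow> d i j x \<le> 0" and rows: "\<And>i x. (\<Sum>j\<in>UNIV. d i j x) = 0"
    and irr: "\<And>x. uniformly_irreducible \<delta> (\<lambda>i j. d i j x)" and \<delta>: "\<delta> > 0"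
  shows "\<exists>L. \<forall>u. (\<exists>M. \<forall>i x. \<bar>u i x\<bar> \<le> M) \<and> visc_subsol (\<lambda>i x p. F i x p - f i x) d u
              \<longrightarrow> (\<forall>i x y. \<bar>u i x - u i y\<bar> \<le> L * dist x y)"
proof -
  note lipschitz_for_bound = bounded_subsol_lipschitz[where F=F and f=f and d=d, OF coer pos f_le d_le]
  define C where "C = oscillation_level CARD('m) A Fm \<delta> (CARD('m) - 1)"
  define K where "K = Fm + real CARD('m) * A * C"
  obtain R where R: "R > 0" "\<And>i x p. R \<le> norm p \<Longrightarrow> K < F i x p"
    using coercive_radius[where F=F and K=K, OF coer pos] by blast
  have "\<bar>u i x - u i y\<bar> \<le> R * dist x y"
    if bound: "\<forall>i x. \<bar>u i x\<bar> \<le> M" and subsol: "visc_subsol (\<lambda>i x p. F i x p - f i x) d u"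
    for u M i x y
  proof (rule subsol_lipschitz[OF R _ subsol])
    show u_bound: "\<bar>u i x\<bar> \<le> M" for i x
      using bound by blast
    obtain L where "\<forall>i x y. \<bar>u i x - u i y\<bar> \<le> L * dist x y"
      using lipschitz_for_bound[of M] bound subsol by blast
    then have u_cont: "continuous_on UNIV (u j)" for j
      by (intro lipschitz_bound_continuous) blast
    have osc: "u j x - u i x \<le> C" for i j x
      unfolding C_def
    proof (rule irreducible_oscillation_bound[OF off rows d_le _ irr \<delta> Fm])
      show "(\<Sum>j\<in>UNIV. d i j x * u j x) \<le> Fm" for i
        using subsol_pointwise[OF pos f_cont d_cont u_cont u_bound subsol] f_le order_trans by blast
    qed
    show "f i x - (\<Sum>j\<in>UNIV. d i j x * u j x) \<le> K" for i x
    proof -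
      have "(\<Sum>j\<in>UNIV. d i j x * u j x) = (\<Sum>j\<in>UNIV. d i j x * (u j x - u i x))"
        using rows[of i x] by (simp add: algebra_simps sum_subtractf sum_distrib_left[symmetric])
      moreover have "\<bar>\<Sum>j\<in>UNIV. d i j x * (u j x - u i x)\<bar> \<le> real CARD('m) * A * C"
        using osc by (intro weighted_sum_bound d_le) (auto simp: abs_le_iff)
      ultimately show ?thesis
        using f_le[of i x] unfolding K_def by linarith
    qed
  qed
  then show ?thesis by blast
qed

theorem lemma3p4:
  fixes F :: "'m::finite \<Rightarrow> real^'n \<Rightarrow> real^'n \<Rightarrow> real"
    and f :: "'m \<Rightarrow> real^'n \<Rightarrow> real"
    and d :: "'m \<Rightarrow> 'm \<Rightarrow> real^'n \<Rightarrow> real"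
  assumes H0F: "\<And>i. continuous_on UNIV (\<lambda>(x, p). F i x p)"
    and H0Fp: "\<And>i p. periodic (\<lambda>x. F i x p)"
    and H0f: "\<And>i. continuous_on UNIV (f i)"
    and H0fp: "\<And>i. periodic (f i)"
    and H1conv: "\<And>i x. convex_on UNIV (F i x)"
    and H1coer: "\<And>i. filterlim (\<lambda>p. INF x. F i x p) at_top at_infinity"
    and H1pos: "\<And>i x p. F i x p \<ge> F i x 0"
    and H1zero: "\<And>i x. F i x 0 = 0"
    and H2: "\<And>i x. f i x \<ge> 0"
    and H3cont: "\<And>i j. continuous_on UNIV (d i j)"
    and H3per: "\<And>i j. periodic (d i j)"
    and H3diag: "\<And>i x. d i i x \<ge> 0"
    and H3off: "\<And>i j x. i \<noteq> j \<Longrightarrow> d i j x \<le> 0"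
    and H3sum: "\<And>i x. (\<Sum>j\<in>UNIV. d i j x) \<ge> 0"
  shows "(\<forall>M. \<exists>L. \<forall>u. (\<forall>i. periodic (u i)) \<and> (\<forall>i x. \<bar>u i x\<bar> \<le> M) \<and>
              visc_subsol (\<lambda>i x p. F i x p - f i x) d u \<longrightarrow>
              (\<forall>i x y. \<bar>u i x - u i y\<bar> \<le> L * dist x y))
       \<and> ((\<forall>i x. (\<Sum>j\<in>UNIV. d i j x) = 0) \<and> (\<forall>x. irreducible_at d x) \<longrightarrow>
          (\<exists>L. \<forall>u. (\<forall>i. periodic (u i)) \<and> (\<exists>M. \<forall>i x. \<bar>u i x\<bar> \<le> M) \<and>
              visc_subsol (\<lambda>i x p. F i x p - f i x) d u \<longrightarrow>
              (\<forall>i x y. \<bar>u i x - u i y\<bar> \<le> L * dist x y)))"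
proof -
  have pos: "\<And>i x p. 0 \<le> F i x p"
    using H1pos H1zero by metis
  obtain Fm where Fm: "0 \<le> Fm" "\<And>i x. \<bar>f i x\<bar> \<le> Fm"
    using periodic_continuous_family_bounded[where g=f, OF H0fp H0f] by blast
  then have f_le: "\<And>i x. f i x \<le> Fm"
    by (meson abs_ge_self order_trans)
  obtain A where "\<And>k x. \<bar>d (fst k) (snd k) x\<bar> \<le> A"
    using periodic_continuous_family_bounded[of "\<lambda>k. d (fst k) (snd k)"] H3per H3cont by blast
  then have d_le: "\<And>i j x. \<bar>d i j x\<bar> \<le> A"
    by (metis fst_conv snd_conv)
  note lipschitz_for_bound = bounded_subsol_lipschitz[where F=F and f=f and d=d, OF H1coer pos f_le d_le]
  show ?thesis
  proof (intro conjI allI impI, goal_cases)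
    case (1 M)
    show ?case
      using lipschitz_for_bound[of M] by blast
  next
    case 2
    then have rows: "\<And>i x. (\<Sum>j\<in>UNIV. d i j x) = 0" and irr: "\<And>x. irreducible_at d x"
      by blast+
    obtain \<delta> where \<delta>: "\<delta> > 0" and irr_unif: "\<And>x. uniformly_irreducible \<delta> (\<lambda>i j. d i j x)"
      using uniform_irreducibility[OF H3cont H3per H3off irr] by blast
    have "\<exists>L. \<forall>u. (\<exists>M. \<forall>i x. \<bar>u i x\<bar> \<le> M) \<and> visc_subsol (\<lambda>i x p. F i x p - f i x) d u
              \<longrightarrow> (\<forall>i x y. \<bar>u i x - u i y\<bar> \<le> L * dist x y)"
      by (rule irreducible_subsol_lipschitz[OF H1coer pos H0f H3cont f_le Fm(1) d_le _ rows irr_unif \<delta>])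
        (simp add: H3off)
    then show ?case
      by blast
  qed
qed

end
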